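(* Let $\Lambda=\{\lambda_1,\lambda_2,\lambda_3,\lambda_4\}$ be a multiset of non-zero real numbers such that $1\in\Lambda$, $|\lambda_j|\le1$ for all $j$, and $\sum_{j=1}^4\lambda_j\ge0$. Then there exists a completely positive trace-preserving linear map $T:\mathcal{M}_4(\mathbb{C})\to\mathcal{M}_4(\mathbb{C})$ with $\mathrm{spec}(T)\setminus\{0\}=\Lambda$.
   Context: $\mathrm{spec}(T)$ is the spectrum of $T$ as an operator on $\mathcal{M}_4(\mathbb{C})$ counted with algebraic multiplicity; $\mathrm{spec}(T)\setminus\{0\}$ removes all zeros. Completely positive: $T\otimes\mathrm{id}$ maps positive semidefinite matrices to positive semidefinite ones; trace-preserving: $\mathrm{tr}[T(X)]=\mathrm{tr}[X]$. *)

theory Defs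
  imports "Jordan_Normal_Form.Char_Poly" "HOL-Library.Multiset"
begin

definition psd :: "nat \<Rightarrow> complex mat \<Rightarrow> bool" where
  "psd n A \<longleftrightarrow> A \<in> carrier_mat n n \<and>
     (\<forall>v \<in> carrier_vec n.
        let q = (\<Sum>i<n. \<Sum>j<n. cnj (v $ i) * A $$ (i, j) * v $ j)
        in Im q = 0 \<and> Re q \<ge> 0)"

definition lin_map4 :: "(complex mat \<Rightarrow> complex mat) \<Rightarrow> bool" where
  "lin_map4 T \<longleftrightarrow>
     (\<forall>A \<in> carrier_mat 4 4. T A \<in> carrier_mat 4 4) \<and>
     (\<forall>A \<in> carrier_mat 4 4. \<forall>B \<in> carrier_mat 4 4. T (A + B) = T A + T B) \<and>
     (\<forall>A \<in> carrier_mat 4 4. \<forall>c. T (c \<cdot>\<^sub>m A) = c \<cdot>\<^sub>m T A)"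

definition block4 :: "complex mat \<Rightarrow> nat \<Rightarrow> nat \<Rightarrow> complex mat" where
  "block4 X k l = mat 4 4 (\<lambda>(i, j). X $$ (4 * k + i, 4 * l + j))"

text \<open>The ampliation of T to M_n(M_4(C)) = M_n \<otimes> M_4(C) (apply T blockwise).\<close>
definition ampl :: "nat \<Rightarrow> (complex mat \<Rightarrow> complex mat) \<Rightarrow> complex mat \<Rightarrow> complex mat" where
  "ampl n T X = mat (4 * n) (4 * n)
     (\<lambda>(a, b). T (block4 X (a div 4) (b div 4)) $$ (a mod 4, b mod 4))"

definition completely_positive4 :: "(complex mat \<Rightarrow> complex mat) \<Rightarrow> bool" where
  "completely_positive4 T \<longleftrightarrow> (\<forall>n X. psd (4 * n) X \<longrightarrow> psd (4 * n) (ampl n T X))"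

definition trace_preserving4 :: "(complex mat \<Rightarrow> complex mat) \<Rightarrow> bool" where
  "trace_preserving4 T \<longleftrightarrow> (\<forall>A \<in> carrier_mat 4 4. (\<Sum>i<4. T A $$ (i, i)) = (\<Sum>i<4. A $$ (i, i)))"

definition unit4 :: "nat \<Rightarrow> nat \<Rightarrow> complex mat" where
  "unit4 k l = mat 4 4 (\<lambda>(i, j). if i = k \<and> j = l then 1 else 0)"

text \<open>Matrix (16 x 16) of T w.r.t. the basis E_00, E_01, ..., E_33 (index 4*i+j).\<close>
definition rep_mat4 :: "(complex mat \<Rightarrow> complex mat) \<Rightarrow> complex mat" where
  "rep_mat4 T = mat 16 16 (\<lambda>(a, b). T (unit4 (b div 4) (b mod 4)) $$ (a div 4, a mod 4))"

definition spec_mset4 :: "(complex mat \<Rightarrow> complex mat) \<Rightarrow> complex multiset" where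
  "spec_mset4 T = (THE M. char_poly (rep_mat4 T) = (\<Prod>a\<in>#M. [:- a, 1:]))"

end

theory Submission
  imports Defs
begin

(* The spectrum {1,a,b,c} is realised by a classical channel
     T_S(X) = diag (S * diag X),
   which measures X in the computational basis and then applies a real 4x4 matrix S
   to the vector of diagonal entries.  T_S is linear; it is trace preserving when the
   columns of S sum to 1, and completely positive when S is entrywise nonnegative,
   because the quadratic form of every ampliation of T_S is a nonnegative combination
   of quadratic forms of the input.  In the basis of matrix units, T_S acts as S on
   span{E_ii} and annihilates every E_ij with i ~= j, so its 16x16 matrix is S
   padded by zeros; if S is similar to an upper triangular U, then spec(T_S) consists
   of the diagonal of U together with 12 zeros.
   The theorem thus reduces to a 4x4 inverse eigenvalue problem for column-stochastic
   matrices with spectrum {1,a,b,c}: if two of a, b, c have a nonnegative sum, a block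
   construction works; otherwise all four numbers 1 +- a +- b +- c with an even number
   of minus signs are nonnegative and a Klein-group circulant, diagonalised by the
   4x4 Hadamard matrix, works. *)

lemma sum_lessThan_4: "(\<Sum>k<4. f k) = f 0 + f 1 + f 2 + f 3" for f :: "nat \<Rightarrow> 'a::comm_monoid_add"
  by (simp add: lessThan_nat_numeral add_ac)

lemma less4_cases: "(i::nat) < 4 \<Longrightarrow> i = 0 \<or> i = 1 \<or> i = 2 \<or> i = 3"
  by auto

lemma sum_blocks4: "(\<Sum>a<4 * n. f a) = (\<Sum>m<n. \<Sum>i<4. f (4 * m + i))" for n :: nat
proof (induction n)
  case (Suc n)
  have "4 * Suc n = Suc (Suc (Suc (Suc (4 * n))))" by simp
  then have "(\<Sum>a<4 * Suc n. f a) = (\<Sum>a<4 * n. f a) + (\<Sum>i<4. f (4 * n + i))"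
    by (simp add: numeral_eq_Suc add_ac)
  then show ?case using Suc by simp
qed simp

lemma sum_delta_pair:
  assumes "finite I" "k \<in> I"
  shows "(\<Sum>i\<in>I. \<Sum>m\<in>M. \<Sum>i'\<in>I. if i = k then if i' = k then f m else 0 else 0) =
    (sum f M :: 'a::comm_monoid_add)"
proof -
  have "(\<Sum>i'\<in>I. if i = k then if i' = k then f m else 0 else 0) = (if i = k then f m else 0)" for i m
    using assms by simp
  moreover have "(\<Sum>m\<in>M. if i = k then f m else 0) = (if i = k then sum f M else 0)" for i
    by simp
  ultimately show ?thesis using assms by simp
qed

section \<open>Classical channels\<close>

definition classical_channel :: "(nat \<Rightarrow> nat \<Rightarrow> real) \<Rightarrow> complex mat \<Rightarrow> complex mat" where
  "classical_channel s X =
     mat 4 4 (\<lambda>(i, j). if i = j then (\<Sum>k<4. complex_of_real (s i k) * X $$ (k, k)) else 0)"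

definition stochastic4 :: "(nat \<Rightarrow> nat \<Rightarrow> real) \<Rightarrow> bool" where
  "stochastic4 s \<longleftrightarrow> (\<forall>i<4. \<forall>k<4. 0 \<le> s i k) \<and> (\<forall>k<4. (\<Sum>i<4. s i k) = 1)"

lemma classical_channel_linear: "lin_map4 (classical_channel s)"
  unfolding lin_map4_def
proof (intro conjI ballI allI)
  fix A B :: "complex mat" and c :: complex
  assume A: "A \<in> carrier_mat 4 4" and B: "B \<in> carrier_mat 4 4"
  show "classical_channel s A \<in> carrier_mat 4 4"
    by (simp add: classical_channel_def)
  show "classical_channel s (A + B) = classical_channel s A + classical_channel s B"
    by (rule eq_matI) (use A B in \<open>auto simp: classical_channel_def sum.distrib algebra_simps\<close>)
  show "classical_channel s (c \<cdot>\<^sub>m A) = c \<cdot>\<^sub>m classical_channel s A"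
    by (rule eq_matI) (use A in \<open>auto simp: classical_channel_def sum_distrib_left algebra_simps\<close>)
qed

text \<open>The trace of the output is the sum of the input diagonal weighted by column sums.\<close>
lemma classical_channel_trace_preserving:
  assumes "\<And>k. k < 4 \<Longrightarrow> (\<Sum>i<4. s i k) = 1"
  shows "trace_preserving4 (classical_channel s)"
  unfolding trace_preserving4_def
proof
  fix A :: "complex mat"
  have "(\<Sum>i<4. classical_channel s A $$ (i, i))
      = (\<Sum>i<4. \<Sum>k<4. complex_of_real (s i k) * A $$ (k, k))"
    by (simp add: classical_channel_def)
  also have "\<dots> = (\<Sum>k<4. complex_of_real (\<Sum>i<4. s i k) * A $$ (k, k))"
    by (subst sum.swap) (simp add: sum_distrib_right)
  also have "\<dots> = (\<Sum>k<4. A $$ (k, k))"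
    using assms by simp
  finally show "(\<Sum>i<4. classical_channel s A $$ (i, i)) = (\<Sum>i<4. A $$ (i, i))" .
qed

section \<open>Complete positivity of classical channels\<close>

definition qform :: "nat \<Rightarrow> complex mat \<Rightarrow> complex vec \<Rightarrow> complex" where
  "qform N A v = (\<Sum>i<N. \<Sum>j<N. cnj (v $ i) * A $$ (i, j) * v $ j)"

lemma psd_iff_qform:
  "psd N A \<longleftrightarrow> A \<in> carrier_mat N N \<and>
     (\<forall>v \<in> carrier_vec N. Im (qform N A v) = 0 \<and> 0 \<le> Re (qform N A v))"
  unfolding psd_def qform_def Let_def by blast

definition block_slot :: "nat \<Rightarrow> nat \<Rightarrow> nat \<Rightarrow> complex vec \<Rightarrow> complex vec" where
  "block_slot n j k v = vec (4 * n) (\<lambda>g. if g mod 4 = k then v $ (4 * (g div 4) + j) else 0)"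

lemma block_slot_nth:
  assumes "m < n" "i < 4"
  shows "block_slot n j k v $ (4 * m + i) = (if i = k then v $ (4 * m + j) else 0)"
proof -
  have "4 * m + i < 4 * n" using assms by linarith
  then show ?thesis using assms by (simp add: block_slot_def)
qed

lemma qform_block_slot:
  assumes "k < 4"
  shows "qform (4 * n) X (block_slot n j k v) =
    (\<Sum>m<n. \<Sum>m'<n. cnj (v $ (4 * m + j)) * X $$ (4 * m + k, 4 * m' + k) * v $ (4 * m' + j))"
proof -
  have "qform (4 * n) X (block_slot n j k v) =
    (\<Sum>m<n. \<Sum>i<4. \<Sum>m'<n. \<Sum>i'<4. if i = k then if i' = k then
       cnj (v $ (4 * m + j)) * X $$ (4 * m + k, 4 * m' + k) * v $ (4 * m' + j) else 0 else 0)"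
    unfolding qform_def sum_blocks4 by (intro sum.cong refl) (simp add: block_slot_nth)
  also have "\<dots> =
    (\<Sum>m<n. \<Sum>m'<n. cnj (v $ (4 * m + j)) * X $$ (4 * m + k, 4 * m' + k) * v $ (4 * m' + j))"
    using assms by (intro sum.cong[OF refl] sum_delta_pair) auto
  finally show ?thesis .
qed

lemma ampl_classical_channel_nth:
  assumes "m < n" "m' < n" "i < 4" "i' < 4"
  shows "ampl n (classical_channel s) X $$ (4 * m + i, 4 * m' + i') =
    (if i = i' then (\<Sum>k<4. complex_of_real (s i k) * X $$ (4 * m + k, 4 * m' + k)) else 0)"
proof -
  have "4 * m + i < 4 * n" "4 * m' + i' < 4 * n" using assms by linarith+
  then show ?thesis using assms by (simp add: ampl_def classical_channel_def block4_def)
qed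

lemma qform_ampl_classical_channel:
  "qform (4 * n) (ampl n (classical_channel s) X) v =
     (\<Sum>j<4. \<Sum>k<4. complex_of_real (s j k) * qform (4 * n) X (block_slot n j k v))"
proof -
  have "qform (4 * n) (ampl n (classical_channel s) X) v =
    (\<Sum>m<n. \<Sum>j<4. \<Sum>m'<n. \<Sum>j'<4. if j = j' then cnj (v $ (4 * m + j)) *
       (\<Sum>k<4. complex_of_real (s j k) * X $$ (4 * m + k, 4 * m' + k)) * v $ (4 * m' + j) else 0)"
    unfolding qform_def sum_blocks4 by (intro sum.cong refl) (simp add: ampl_classical_channel_nth)
  also have "\<dots> = (\<Sum>m<n. \<Sum>j<4. \<Sum>m'<n. cnj (v $ (4 * m + j)) *
       (\<Sum>k<4. complex_of_real (s j k) * X $$ (4 * m + k, 4 * m' + k)) * v $ (4 * m' + j))"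
    by (intro sum.cong refl) (simp add: sum.delta)
  also have "\<dots> = (\<Sum>m<n. \<Sum>j<4. \<Sum>m'<n. \<Sum>k<4. complex_of_real (s j k) *
      (cnj (v $ (4 * m + j)) * X $$ (4 * m + k, 4 * m' + k) * v $ (4 * m' + j)))"
    by (intro sum.cong refl) (simp add: sum_distrib_left sum_distrib_right algebra_simps)
  also have "\<dots> = (\<Sum>j<4. \<Sum>k<4. \<Sum>m<n. \<Sum>m'<n. complex_of_real (s j k) *
      (cnj (v $ (4 * m + j)) * X $$ (4 * m + k, 4 * m' + k) * v $ (4 * m' + j)))"
    by (subst sum.swap, subst (2) sum.swap, subst (3) sum.swap) simp
  also have "\<dots> = (\<Sum>j<4. \<Sum>k<4. complex_of_real (s j k) * qform (4 * n) X (block_slot n j k v))"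
    by (intro sum.cong refl) (simp add: qform_block_slot sum_distrib_left)
  finally show ?thesis .
qed

lemma classical_channel_completely_positive:
  assumes nonneg: "\<And>i k. i < 4 \<Longrightarrow> k < 4 \<Longrightarrow> 0 \<le> s i k"
  shows "completely_positive4 (classical_channel s)"
  unfolding completely_positive4_def
proof (intro allI impI)
  fix n X assume X: "psd (4 * n) X"
  have form_X: "Im (qform (4 * n) X (block_slot n j k v)) = 0 \<and>
      0 \<le> Re (qform (4 * n) X (block_slot n j k v))" for j k v
    using X unfolding psd_iff_qform by (simp add: block_slot_def)
  show "psd (4 * n) (ampl n (classical_channel s) X)"
    unfolding psd_iff_qform qform_ampl_classical_channel
    using form_X nonneg by (auto simp: ampl_def Im_sum Re_sum intro!: sum_nonneg)
qed

section \<open>The matrix of a classical channel\<close>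

text \<open>The 16x16 matrix that acts as A on the coordinates of the diagonal matrix units
  E_ii (index 5i in the basis E_00, E_01, ..., E_33) and as c times the identity on the
  remaining twelve coordinates.  Lifting is multiplicative, so it preserves similarity.\<close>
definition lift16 :: "complex \<Rightarrow> complex mat \<Rightarrow> complex mat" where
  "lift16 c A = mat 16 16 (\<lambda>(a, b).
     if a div 4 = a mod 4 \<and> b div 4 = b mod 4 then A $$ (a div 4, b div 4)
     else if a = b then c else 0)"

lemma lift16_carrier: "lift16 c A \<in> carrier_mat 16 16"
  and lift16_dim [simp]: "dim_row (lift16 c A) = 16" "dim_col (lift16 c A) = 16"
  by (simp_all add: lift16_def)

lemma less16_cases: "(a::nat) < 16 \<Longrightarrow> a \<in> {0,1,2,3,4,5,6,7,8,9,10,11,12,13,14,15}"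
proof -
  have "{..<16::nat} = {0,1,2,3,4,5,6,7,8,9,10,11,12,13,14,15}"
    by (simp add: lessThan_nat_numeral lessThan_Suc insert_commute)
  then show "a < 16 \<Longrightarrow> a \<in> {0,1,2,3,4,5,6,7,8,9,10,11,12,13,14,15}" by blast
qed

lemma lift16_row_sum:
  assumes "a < 16"
  shows "(\<Sum>k<16. lift16 c A $$ (a, k) * g k) =
    (if a div 4 = a mod 4 then (\<Sum>i<4. A $$ (a div 4, i) * g (5 * i)) else c * g a)"
proof -
  have sum16: "(\<Sum>k<16. f k) = f 0 + f 1 + f 2 + f 3 + f 4 + f 5 + f 6 + f 7 + f 8 + f 9 + f 10
      + f 11 + f 12 + f 13 + f 14 + f 15" for f :: "nat \<Rightarrow> complex"
    by (simp add: lessThan_nat_numeral)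
  show ?thesis
    unfolding sum16 sum_lessThan_4 using less16_cases[OF assms] by (auto simp: lift16_def)
qed

lemma lift16_mult:
  assumes A: "A \<in> carrier_mat 4 4" and B: "B \<in> carrier_mat 4 4"
  shows "lift16 c A * lift16 d B = lift16 (c * d) (A * B)"
proof (rule eq_matI)
  fix a b assume "a < dim_row (lift16 (c * d) (A * B))" "b < dim_col (lift16 (c * d) (A * B))"
  then have ab: "a < 16" "b < 16" by (auto simp: lift16_def)
  have "(lift16 c A * lift16 d B) $$ (a, b) = (\<Sum>k<16. lift16 c A $$ (a, k) * lift16 d B $$ (k, b))"
    using ab by (simp add: lift16_def scalar_prod_def lessThan_atLeast0)
  also have "\<dots> = (if a div 4 = a mod 4 then (\<Sum>i<4. A $$ (a div 4, i) * lift16 d B $$ (5 * i, b))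
      else c * lift16 d B $$ (a, b))"
    by (rule lift16_row_sum[OF ab(1)])
  also have "\<dots> = lift16 (c * d) (A * B) $$ (a, b)"
  proof (cases "a div 4 = a mod 4")
    case True
    moreover have "a div 4 < 4" "b div 4 < 4" using ab by simp_all
    ultimately show ?thesis using ab A B
      by (auto simp: lift16_def scalar_prod_def lessThan_atLeast0[symmetric] sum_lessThan_4)
  next
    case False
    then show ?thesis using ab by (auto simp: lift16_def)
  qed
  finally show "(lift16 c A * lift16 d B) $$ (a, b) = lift16 (c * d) (A * B) $$ (a, b)" .
qed (auto simp: lift16_def)

lemma lift16_one: "lift16 1 (1\<^sub>m 4) = 1\<^sub>m 16"
proof (rule eq_matI)
  fix a b assume "a < dim_row (1\<^sub>m 16 :: complex mat)" "b < dim_col (1\<^sub>m 16 :: complex mat)"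
  then have ab: "a < 16" "b < 16" by auto
  have "a = 4 * (a div 4) + a mod 4" "b = 4 * (b div 4) + b mod 4" by simp_all
  then have "a div 4 = a mod 4 \<Longrightarrow> b div 4 = b mod 4 \<Longrightarrow> a div 4 = b div 4 \<Longrightarrow> a = b" by metis
  then show "lift16 1 (1\<^sub>m 4) $$ (a, b) = (1\<^sub>m 16 :: complex mat) $$ (a, b)"
    using ab by (auto simp: lift16_def)
qed (auto simp: lift16_def)

lemma similar_mat_wit_lift16:
  assumes "similar_mat_wit A U P Q" "A \<in> carrier_mat 4 4"
  shows "similar_mat_wit (lift16 0 A) (lift16 0 U) (lift16 1 P) (lift16 1 Q)"
proof -
  have carr: "U \<in> carrier_mat 4 4" "P \<in> carrier_mat 4 4" "Q \<in> carrier_mat 4 4"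
    and inv: "P * Q = 1\<^sub>m 4" "Q * P = 1\<^sub>m 4" and A: "A = P * U * Q"
    using similar_mat_witD2[OF assms(2,1)] by auto
  have "lift16 1 P * lift16 1 Q = 1\<^sub>m 16" "lift16 1 Q * lift16 1 P = 1\<^sub>m 16"
    using carr inv by (simp_all add: lift16_mult lift16_one)
  moreover have "lift16 0 A = lift16 1 P * lift16 0 U * lift16 1 Q"
    using A carr by (simp add: lift16_mult)
  ultimately show ?thesis
    using lift16_carrier by (intro similar_mat_witI) auto
qed

lemma lift16_upper_triangular:
  assumes "upper_triangular U" "U \<in> carrier_mat 4 4"
  shows "upper_triangular (lift16 0 U)"
  unfolding upper_triangular_def
proof (intro allI impI)
  fix a b assume "a < dim_row (lift16 0 U)" "b < a"
  then have ab: "a < 16" "b < a" by (auto simp: lift16_def)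
  have "a = 4 * (a div 4) + a mod 4" "b = 4 * (b div 4) + b mod 4" by simp_all
  then have "a div 4 = a mod 4 \<Longrightarrow> b div 4 = b mod 4 \<Longrightarrow> b div 4 < a div 4" using ab(2) by linarith
  then show "lift16 0 U $$ (a, b) = 0"
    using ab assms unfolding upper_triangular_def by (auto simp: lift16_def)
qed

lemma nonzero_diag_lift16:
  "filter_mset (\<lambda>z. z \<noteq> 0) (mset (diag_mat (lift16 0 U))) =
    filter_mset (\<lambda>z. z \<noteq> 0) {#U $$ (0, 0), U $$ (1, 1), U $$ (2, 2), U $$ (3, 3)#}"
proof -
  have "[0..<16] = [0,1,2,3,4,5,6,7,8,9,10,11,12,13,14,15::nat]" by (simp add: upt_rec)
  then show ?thesis by (simp add: diag_mat_def lift16_def)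
qed

text \<open>T_s maps E_kk to the diagonal matrix with entries s i k and kills E_kl for k ~= l,
  so its matrix is the lift of s.\<close>
lemma rep_mat4_classical_channel:
  "rep_mat4 (classical_channel s) = lift16 0 (mat 4 4 (\<lambda>(i, j). complex_of_real (s i j)))"
proof (rule eq_matI)
  fix a b assume "a < dim_row (lift16 0 (mat 4 4 (\<lambda>(i, j). complex_of_real (s i j))))"
    "b < dim_col (lift16 0 (mat 4 4 (\<lambda>(i, j). complex_of_real (s i j))))"
  then have ab: "a < 16" "b < 16" by (auto simp: lift16_def)
  then have lt: "a div 4 < 4" "b div 4 < 4" "a mod 4 < 4" "b mod 4 < 4" by auto
  have unit: "unit4 (b div 4) (b mod 4) $$ (k, k) =
      (if k = b div 4 then (if b div 4 = b mod 4 then 1 else 0) else 0)" if "k < 4" for k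
    using that lt by (auto simp: unit4_def)
  have channel_unit: "(\<Sum>k<4. complex_of_real (s i k) * unit4 (b div 4) (b mod 4) $$ (k, k)) =
      complex_of_real (s i (b div 4)) * (if b div 4 = b mod 4 then 1 else 0)" for i
  proof -
    have "(\<Sum>k<4. complex_of_real (s i k) * unit4 (b div 4) (b mod 4) $$ (k, k)) =
        (\<Sum>k<4. if k = b div 4 then complex_of_real (s i k) * (if b div 4 = b mod 4 then 1 else 0) else 0)"
      by (intro sum.cong refl) (simp add: unit)
    also have "\<dots> = complex_of_real (s i (b div 4)) * (if b div 4 = b mod 4 then 1 else 0)"
      using lt by (subst sum.delta) auto
    finally show ?thesis .
  qed
  have "rep_mat4 (classical_channel s) $$ (a, b) = (if a div 4 = a mod 4 then
      (\<Sum>k<4. complex_of_real (s (a div 4) k) * unit4 (b div 4) (b mod 4) $$ (k, k)) else 0)"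
    using ab lt by (simp add: rep_mat4_def classical_channel_def)
  also have "\<dots> = lift16 0 (mat 4 4 (\<lambda>(i, j). complex_of_real (s i j))) $$ (a, b)"
    unfolding channel_unit using ab lt by (auto simp: lift16_def)
  finally show "rep_mat4 (classical_channel s) $$ (a, b) =
      lift16 0 (mat 4 4 (\<lambda>(i, j). complex_of_real (s i j))) $$ (a, b)" .
qed (simp_all add: rep_mat4_def)

section \<open>The spectrum of a classical channel\<close>

lemma proots_prod_linear_factors: "proots (\<Prod>a\<in>#M. [:- a, 1:]) = (M :: complex multiset)"
proof (induction M)
  case (add x M)
  have nonzero: "(\<Prod>a\<in>#M. [:- a, 1:]) \<noteq> 0" by (auto simp: prod_mset_zero_iff)
  have "proots (\<Prod>a\<in>#add_mset x M. [:- a, 1:]) = proots [:- x, 1:] + proots (\<Prod>a\<in>#M. [:- a, 1:])"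
    using nonzero by (simp add: proots_mult del: mult_pCons_left)
  also have "\<dots> = add_mset x M"
    using add proots_linear_factor[of "-x"] by simp
  finally show ?case .
qed simp

text \<open>The multiset in the definition of the spectrum is uniquely determined.\<close>
lemma spec_mset4_eqI:
  assumes "char_poly (rep_mat4 T) = (\<Prod>a\<in>#M. [:- a, 1:])"
  shows "spec_mset4 T = M"
  unfolding spec_mset4_def
proof (rule the_equality)
  fix N assume "char_poly (rep_mat4 T) = (\<Prod>a\<in>#N. [:- a, 1:])"
  then show "N = M"
    using assms proots_prod_linear_factors by metis
qed (rule assms)

lemma nonzero_spec_classical_channel:
  assumes sim: "similar_mat_wit (mat 4 4 (\<lambda>(i, j). complex_of_real (s i j))) U P Q"
    and U: "upper_triangular U" "U \<in> carrier_mat 4 4"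
  shows "filter_mset (\<lambda>z. z \<noteq> 0) (spec_mset4 (classical_channel s)) =
    filter_mset (\<lambda>z. z \<noteq> 0) {#U $$ (0, 0), U $$ (1, 1), U $$ (2, 2), U $$ (3, 3)#}"
proof -
  have "similar_mat (rep_mat4 (classical_channel s)) (lift16 0 U)"
    unfolding similar_mat_def rep_mat4_classical_channel
    using similar_mat_wit_lift16[OF sim] by auto
  then have "char_poly (rep_mat4 (classical_channel s)) = char_poly (lift16 0 U)"
    by (rule char_poly_similar)
  also have "\<dots> = (\<Prod>a\<leftarrow>diag_mat (lift16 0 U). [:- a, 1:])"
    by (rule char_poly_upper_triangular[OF lift16_carrier lift16_upper_triangular[OF U]])
  also have "\<dots> = (\<Prod>a\<in>#mset (diag_mat (lift16 0 U)). [:- a, 1:])"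
    by (simp add: prod_mset_prod_list[symmetric])
  finally have "spec_mset4 (classical_channel s) = mset (diag_mat (lift16 0 U))"
    by (rule spec_mset4_eqI)
  then show ?thesis by (simp add: nonzero_diag_lift16)
qed

section \<open>Reduction to stochastic matrices\<close>

definition realizable :: "real \<Rightarrow> real \<Rightarrow> real \<Rightarrow> bool" where
  "realizable a b c \<longleftrightarrow> (\<exists>T. lin_map4 T \<and> completely_positive4 T \<and> trace_preserving4 T \<and>
     filter_mset (\<lambda>z. z \<noteq> 0) (spec_mset4 T) =
       {#1, complex_of_real a, complex_of_real b, complex_of_real c#})"

lemma realizable_swap23: "realizable a b c \<Longrightarrow> realizable a c b"
  and realizable_swap12: "realizable a b c \<Longrightarrow> realizable b a c"
  unfolding realizable_def by (simp_all add: add_mset_commute)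

lemma realizable_by_stochastic:
  assumes "stochastic4 s"
    and "similar_mat_wit (mat 4 4 (\<lambda>(i, j). complex_of_real (s i j))) U P Q"
    and "upper_triangular U" "U \<in> carrier_mat 4 4"
    and "U $$ (0, 0) = 1" "U $$ (1, 1) = complex_of_real a"
    and "U $$ (2, 2) = complex_of_real b" "U $$ (3, 3) = complex_of_real c"
    and "a \<noteq> 0" "b \<noteq> 0" "c \<noteq> 0"
  shows "realizable a b c"
  unfolding realizable_def
proof (intro exI conjI)
  show "lin_map4 (classical_channel s)"
    by (rule classical_channel_linear)
  show "completely_positive4 (classical_channel s)"
    using assms(1) by (intro classical_channel_completely_positive) (auto simp: stochastic4_def)
  show "trace_preserving4 (classical_channel s)"
    using assms(1) by (intro classical_channel_trace_preserving) (auto simp: stochastic4_def)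
  show "filter_mset (\<lambda>z. z \<noteq> 0) (spec_mset4 (classical_channel s)) =
      {#1, complex_of_real a, complex_of_real b, complex_of_real c#}"
    using nonzero_spec_classical_channel[OF assms(2-4)] assms(5-) by simp
qed

definition M4 :: "'a list list \<Rightarrow> 'a mat" where
  "M4 xs = mat 4 4 (\<lambda>(i, j). xs ! i ! j)"

lemma M4_carrier: "M4 xs \<in> carrier_mat 4 4"
  by (simp add: M4_def)

lemma M4_mult_eq:
  assumes "\<And>i j. i \<in> {0,1,2,3} \<Longrightarrow> j \<in> {0,1,2,3} \<Longrightarrow> (\<Sum>k<4. xs ! i ! k * ys ! k ! j) = zs ! i ! j"
  shows "M4 xs * M4 ys = M4 (zs :: 'a :: comm_ring_1 list list)"
proof (rule eq_matI)
  fix i j assume "i < dim_row (M4 zs)" "j < dim_col (M4 zs)"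
  then have ij: "i < 4" "j < 4" by (auto simp: M4_def)
  then have "(M4 xs * M4 ys) $$ (i, j) = (\<Sum>k<4. xs ! i ! k * ys ! k ! j)"
    by (simp add: M4_def scalar_prod_def lessThan_atLeast0)
  also have "\<dots> = zs ! i ! j" using assms less4_cases[OF ij(1)] less4_cases[OF ij(2)] by auto
  finally show "(M4 xs * M4 ys) $$ (i, j) = M4 zs $$ (i, j)" using ij by (simp add: M4_def)
qed (auto simp: M4_def)

lemma M4_one: "M4 [[1,0,0,0],[0,1,0,0],[0,0,1,0],[0,0,0,1]] = (1\<^sub>m 4 :: 'a::comm_ring_1 mat)"
  by (rule eq_matI) (auto simp: M4_def dest!: less4_cases)

lemma complex_mat_of_rows:
  assumes "length xs = 4" "\<And>i. i < 4 \<Longrightarrow> length (xs ! i) = 4"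
  shows "mat 4 4 (\<lambda>(i, j). complex_of_real (xs ! i ! j)) = M4 (map (map complex_of_real) xs)"
  using assms by (auto simp: M4_def intro!: eq_matI)

section \<open>The two stochastic constructions\<close>

text \<open>If b + c >= 0 and c <= b, the block matrix
    [[p,q,r,r],[q,p,0,0],[0,0,x,y],[0,0,y,x]],
  with p, q = (1 +- a)/2, x, y = (b +- c)/2 and r = 1 - b, is column-stochastic.  The
  eigenvector basis of the two symmetric 2x2 blocks conjugates it to an upper triangular
  matrix with diagonal 1, a, b, c.\<close>
lemma realizable_block:
  fixes a b c :: real
  assumes "\<bar>a\<bar> \<le> 1" "c \<le> b" "b \<le> 1" "0 \<le> b + c" "a \<noteq> 0" "b \<noteq> 0" "c \<noteq> 0"
  shows "realizable a b c"
proof -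
  define p q x y r where "p = (1 + a) / 2" "q = (1 - a) / 2" "x = (b + c) / 2" "y = (b - c) / 2"
    "r = 1 - b"
  define rows where "rows = [[p,q,r,r],[q,p,0,0],[0,0,x,y],[0,0,y,x]]"
  define P :: "complex mat" where "P = M4 [[1,1,0,0],[1,-1,0,0],[0,0,1,1],[0,0,1,-1]]"
  define Q :: "complex mat" where
    "Q = M4 [[1/2,1/2,0,0],[1/2,-1/2,0,0],[0,0,1/2,1/2],[0,0,1/2,-1/2]]"
  define U :: "complex mat" where
    "U = M4 [[1,0,of_real r,0],[0,of_real a,of_real r,0],[0,0,of_real b,0],[0,0,0,of_real c]]"
  have "stochastic4 (\<lambda>i j. rows ! i ! j)"
    unfolding stochastic4_def
  proof (intro conjI allI impI)
    show "0 \<le> rows ! i ! k" if "i < 4" "k < 4" for i k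
      using less4_cases[OF that(1)] less4_cases[OF that(2)] assms
      by (auto simp: rows_def p_q_x_y_r_def)
    show "(\<Sum>i<4. rows ! i ! k) = 1" if "k < 4" for k
      using less4_cases[OF that] by (auto simp: sum_lessThan_4 rows_def p_q_x_y_r_def field_simps)
  qed
  moreover have "similar_mat_wit (mat 4 4 (\<lambda>(i, j). complex_of_real (rows ! i ! j))) U P Q"
  proof (rule similar_mat_witI)
    show "P * Q = 1\<^sub>m 4" "Q * P = 1\<^sub>m 4"
      unfolding P_def Q_def M4_one[symmetric] by (rule M4_mult_eq; auto simp: sum_lessThan_4)+
    have "P * U = M4 [[1,of_real a,2*of_real r,0],[1,-of_real a,0,0],
        [0,0,of_real b,of_real c],[0,0,of_real b,-of_real c]]"
      unfolding P_def U_def by (rule M4_mult_eq) (auto simp: sum_lessThan_4)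
    also have "\<dots> * Q = M4 (map (map complex_of_real) rows)"
      unfolding Q_def rows_def
      by (rule M4_mult_eq) (auto simp: sum_lessThan_4 p_q_x_y_r_def field_simps)
    also have "\<dots> = mat 4 4 (\<lambda>(i, j). complex_of_real (rows ! i ! j))"
      by (rule complex_mat_of_rows[symmetric]) (auto simp: rows_def dest!: less4_cases)
    finally show "mat 4 4 (\<lambda>(i, j). complex_of_real (rows ! i ! j)) = P * U * Q" ..
  qed (simp_all add: P_def Q_def U_def M4_carrier)
  moreover have "upper_triangular U"
    unfolding upper_triangular_def U_def M4_def
    by (auto dest!: less4_cases simp: numeral_2_eq_2 numeral_3_eq_3 less_Suc_eq)
  ultimately show ?thesis
    by (rule realizable_by_stochastic) (simp_all add: U_def M4_def assms)
qed

text \<open>If all four numbers 1 +- a +- b +- c with an even number of minus signs are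
  nonnegative, the Klein-group circulant with these entries divided by 4 is
  doubly stochastic and diagonalised by the 4x4 Hadamard matrix with eigenvalues
  1, a, b, c.\<close>
lemma realizable_klein:
  fixes a b c :: real
  assumes "0 \<le> 1 + a + b + c" "0 \<le> 1 - a + b - c" "0 \<le> 1 + a - b - c" "0 \<le> 1 - a - b + c"
    and "a \<noteq> 0" "b \<noteq> 0" "c \<noteq> 0"
  shows "realizable a b c"
proof -
  define t0 t1 t2 t3 where "t0 = (1 + a + b + c) / 4" "t1 = (1 - a + b - c) / 4"
    "t2 = (1 + a - b - c) / 4" "t3 = (1 - a - b + c) / 4"
  define rows where "rows = [[t0,t1,t2,t3],[t1,t0,t3,t2],[t2,t3,t0,t1],[t3,t2,t1,t0]]"
  define H :: "complex mat" where "H = M4 [[1,1,1,1],[1,-1,1,-1],[1,1,-1,-1],[1,-1,-1,1]]"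
  define H' :: "complex mat" where
    "H' = M4 [[1/4,1/4,1/4,1/4],[1/4,-1/4,1/4,-1/4],[1/4,1/4,-1/4,-1/4],[1/4,-1/4,-1/4,1/4]]"
  define U :: "complex mat" where
    "U = M4 [[1,0,0,0],[0,of_real a,0,0],[0,0,of_real b,0],[0,0,0,of_real c]]"
  have "stochastic4 (\<lambda>i j. rows ! i ! j)"
    unfolding stochastic4_def
  proof (intro conjI allI impI)
    show "0 \<le> rows ! i ! k" if "i < 4" "k < 4" for i k
      using less4_cases[OF that(1)] less4_cases[OF that(2)] assms
      by (auto simp: rows_def t0_t1_t2_t3_def)
    show "(\<Sum>i<4. rows ! i ! k) = 1" if "k < 4" for k
      using less4_cases[OF that] by (auto simp: sum_lessThan_4 rows_def t0_t1_t2_t3_def field_simps)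
  qed
  moreover have "similar_mat_wit (mat 4 4 (\<lambda>(i, j). complex_of_real (rows ! i ! j))) U H H'"
  proof (rule similar_mat_witI)
    show "H * H' = 1\<^sub>m 4" "H' * H = 1\<^sub>m 4"
      unfolding H_def H'_def M4_one[symmetric] by (rule M4_mult_eq; auto simp: sum_lessThan_4)+
    have "H * U = M4 [[1,of_real a,of_real b,of_real c],[1,-of_real a,of_real b,-of_real c],
        [1,of_real a,-of_real b,-of_real c],[1,-of_real a,-of_real b,of_real c]]"
      unfolding H_def U_def by (rule M4_mult_eq) (auto simp: sum_lessThan_4)
    also have "\<dots> * H' = M4 (map (map complex_of_real) rows)"
      unfolding H'_def rows_def
      by (rule M4_mult_eq) (auto simp: sum_lessThan_4 t0_t1_t2_t3_def field_simps)
    also have "\<dots> = mat 4 4 (\<lambda>(i, j). complex_of_real (rows ! i ! j))"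
      by (rule complex_mat_of_rows[symmetric]) (auto simp: rows_def dest!: less4_cases)
    finally show "mat 4 4 (\<lambda>(i, j). complex_of_real (rows ! i ! j)) = H * U * H'" ..
  qed (simp_all add: H_def H'_def U_def M4_carrier)
  moreover have "upper_triangular U"
    unfolding upper_triangular_def U_def M4_def
    by (auto dest!: less4_cases simp: numeral_2_eq_2 numeral_3_eq_3 less_Suc_eq)
  ultimately show ?thesis
    by (rule realizable_by_stochastic) (simp_all add: U_def M4_def assms)
qed

text \<open>Every admissible triple is covered by one of the constructions, up to reordering:
  either some pair has nonnegative sum (block construction), or all pairwise sums are
  negative, and then the Klein conditions follow from the bounds |a|, |b|, |c| <= 1.\<close>
lemma realizable_if_admissible:
  assumes "\<bar>a\<bar> \<le> 1" "\<bar>b\<bar> \<le> 1" "\<bar>c\<bar> \<le> 1" "0 \<le> 1 + a + b + c" "a \<noteq> 0" "b \<noteq> 0" "c \<noteq> 0"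
  shows "realizable a b c"
proof -
  have pair: "realizable x y z"
    if "\<bar>x\<bar> \<le> 1" "\<bar>y\<bar> \<le> 1" "\<bar>z\<bar> \<le> 1" "0 \<le> y + z" "x \<noteq> 0" "y \<noteq> 0" "z \<noteq> 0" for x y z
  proof (cases "z \<le> y")
    case True
    then show ?thesis using that by (intro realizable_block) auto
  next
    case False
    then have "realizable x z y" using that by (intro realizable_block) auto
    then show ?thesis by (rule realizable_swap23)
  qed
  consider "0 \<le> b + c" | "0 \<le> a + c" | "0 \<le> a + b" | "b + c < 0" "a + c < 0" "a + b < 0"
    by linarith
  then show ?thesis
  proof cases
    case 1
    then show ?thesis by (rule pair[OF assms(1-3) _ assms(5-7)])
  next
    case 2
    then have "realizable b a c" by (rule pair[OF assms(2,1,3) _ assms(6,5,7)])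
    then show ?thesis by (rule realizable_swap12)
  next
    case 3
    then have "realizable c a b" by (rule pair[OF assms(3,1,2) _ assms(7,5,6)])
    then show ?thesis by (rule realizable_swap23[OF realizable_swap12])
  next
    case 4
    have "\<bar>a\<bar> \<le> 1" "\<bar>b\<bar> \<le> 1" "\<bar>c\<bar> \<le> 1" using assms(1-3) .
    with 4 assms(4) show ?thesis
      by (intro realizable_klein assms(5-7)) linarith+
  qed
qed

lemma mset_size4_containing:
  assumes "size M = 4" "x \<in># M"
  obtains a b c where "M = {#x, a, b, c#}"
proof -
  obtain L1 where L1: "M = add_mset x L1"
    using assms(2) by (metis mset_add)
  then have "size L1 = Suc (Suc (Suc 0))"
    using assms(1) by simp
  then obtain a L2 where L2: "L1 = add_mset a L2" and "size L2 = Suc (Suc 0)"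
    by (metis size_eq_Suc_imp_eq_union size_add_mset nat.inject)
  then obtain b L3 where L3: "L2 = add_mset b L3" and "size L3 = Suc 0"
    by (metis size_eq_Suc_imp_eq_union size_add_mset nat.inject)
  then obtain c where "L3 = {#c#}"
    using size_1_singleton_mset by (metis One_nat_def)
  with L1 L2 L3 show ?thesis
    using that by simp
qed

theorem theorem6:
  fixes \<Lambda> :: "real multiset"
  assumes "size \<Lambda> = 4"
    and "0 \<notin># \<Lambda>"
    and "1 \<in># \<Lambda>"
    and "\<forall>x \<in># \<Lambda>. \<bar>x\<bar> \<le> 1"
    and "sum_mset \<Lambda> \<ge> 0"
  shows "\<exists>T. lin_map4 T \<and> completely_positive4 T \<and> trace_preserving4 T \<and>
           filter_mset (\<lambda>z. z \<noteq> 0) (spec_mset4 T) = image_mset complex_of_real \<Lambda>"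
proof -
  obtain a b c where \<Lambda>: "\<Lambda> = {#1, a, b, c#}"
    using mset_size4_containing[OF assms(1,3)] .
  have "realizable a b c"
    by (rule realizable_if_admissible) (use assms \<Lambda> in \<open>auto simp: add_ac\<close>)
  then show ?thesis
    unfolding realizable_def \<Lambda> by simp
qed

end
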